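(* Let $\Omega\subset\mathbb{C}$ be a domain, $p>0$, and let $\overline D_n\subset\Omega$, $n=1,2,\dots,\mathcal N$ ($\mathcal N$ finite or infinite), be closed discs of radius $R>0$, where if $\mathcal N=\infty$ there exists $N$ such that the $\overline D_n$ are pairwise disjoint for $n>N$. Then $$\mathcal A(\Omega)\cap\mathcal A_p\Big(\Omega\setminus\bigcup_{n=1}^{\mathcal N}\overline D_n\Big)\subset\mathcal A_p(\Omega).$$
   Context: For a domain (open set) $\Omega'\subset\mathbb{C}$, $\mathcal A(\Omega')$ is the algebra of holomorphic functions on $\Omega'$, and for $p>0$, $\mathcal A_p(\Omega')=\{f\in\mathcal A(\Omega'):\exists\,c,M>0\text{ with }|f(\lambda)|\le Me^{c|\lambda|^p}\text{ for all }\lambda\in\Omega'\}$. The statement means: if $f$ is holomorphic on $\Omega$ and satisfies such a bound on $\Omega\setminus\bigcup\overline D_n$, then it satisfies such a bound (with possibly different constants) on all of $\Omega$. *)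

theory Defs
  imports "HOL-Analysis.Analysis"
begin

definition hol_alg :: "complex set \<Rightarrow> (complex \<Rightarrow> complex) set" where
  "hol_alg S = {f. f holomorphic_on S}"

definition Ap_alg :: "real \<Rightarrow> complex set \<Rightarrow> (complex \<Rightarrow> complex) set" where
  "Ap_alg p S = {f. f holomorphic_on S \<and>
     (\<exists>c M. c > 0 \<and> M > 0 \<and> (\<forall>z\<in>S. norm (f z) \<le> M * exp (c * norm z powr p)))}"

end

theory Submission
  imports Defs "HOL-Complex_Analysis.Conformal_Mappings"
begin

text \<open>Beyond some index the discs are pairwise disjoint; their centres are then
  \<open>2R\<close>-separated, so that part of the family is locally finite and its union is closed.
  The finitely many remaining discs have a compact union \<open>U\<close> on which \<open>f\<close> is bounded.
  A boundary point of a disc of the disjoint family that lies outside \<open>U\<close> avoids all other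
  discs, hence is a limit of exterior points, where the growth bound holds; by continuity it
  holds on the circle, and by the maximum modulus principle on the whole disc, at the price
  of replacing \<open>|z|\<close> by \<open>|z| + 2R\<close>. The shift is absorbed by
  \<open>(a + b)\<^sup>p \<le> 2\<^sup>p (a\<^sup>p + b\<^sup>p)\<close>. Neither connectedness of \<open>\<Omega>\<close> nor the
  shape of the index set is needed.\<close>

lemma dist_gt_if_disjoint_cballs:
  fixes a b :: "'a::real_normed_vector"
  assumes "cball a r \<inter> cball b r = {}"
  shows "2 * r < dist a b"
proof (rule ccontr)
  assume "\<not> 2 * r < dist a b"
  then have "midpoint a b \<in> cball a r \<inter> cball b r"
    by (simp add: dist_midpoint)
  with assms show False by blast
qed

lemma finite_disjoint_cballs_meeting_ball:
  fixes ctr :: "'i \<Rightarrow> 'a::{real_normed_vector, heine_borel}"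
  assumes "R > 0"
    and disj: "\<And>m n. m \<in> T \<Longrightarrow> n \<in> T \<Longrightarrow> m \<noteq> n \<Longrightarrow> cball (ctr m) R \<inter> cball (ctr n) R = {}"
  shows "finite {m\<in>T. cball (ctr m) R \<inter> ball w r \<noteq> {}}"
proof -
  have sep: "2 * R < dist (ctr m) (ctr n)" if "m \<in> T" "n \<in> T" "m \<noteq> n" for m n
    using dist_gt_if_disjoint_cballs disj that by blast
  then have inj: "inj_on ctr T"
    using \<open>R > 0\<close> by (force intro: inj_onI)
  have "finite (cball w (R + r) \<inter> ctr ` T)"
  proof (rule finite_not_islimpt_in_compact)
    show "\<not> z islimpt ctr ` T" for z
      by (rule discrete_imp_not_islimpt[of "2 * R"]) (use \<open>R > 0\<close> sep in force)+
  qed simp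
  moreover have "ctr ` {m\<in>T. cball (ctr m) R \<inter> ball w r \<noteq> {}} \<subseteq> cball w (R + r) \<inter> ctr ` T"
  proof
    fix y assume "y \<in> ctr ` {m\<in>T. cball (ctr m) R \<inter> ball w r \<noteq> {}}"
    then obtain m where "m \<in> T" "y = ctr m" "cball y R \<inter> ball w r \<noteq> {}"
      by blast
    moreover from this obtain u where "dist y u \<le> R" "dist w u < r"
      by auto
    moreover have "dist w y \<le> dist w u + dist y u"
      by (rule dist_triangle2)
    ultimately show "y \<in> cball w (R + r) \<inter> ctr ` T"
      by auto
  qed
  ultimately have "finite (ctr ` {m\<in>T. cball (ctr m) R \<inter> ball w r \<noteq> {}})"
    by (rule finite_subset[rotated])
  moreover have "inj_on ctr {m\<in>T. cball (ctr m) R \<inter> ball w r \<noteq> {}}"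
    using inj by (rule inj_on_subset) blast
  ultimately show ?thesis
    by (rule finite_imageD)
qed

lemma closed_Union_disjoint_cballs:
  fixes ctr :: "'i \<Rightarrow> 'a::{real_normed_vector, heine_borel}"
  assumes "R > 0"
    and disj: "\<And>m n. m \<in> T \<Longrightarrow> n \<in> T \<Longrightarrow> m \<noteq> n \<Longrightarrow> cball (ctr m) R \<inter> cball (ctr n) R = {}"
  shows "closed (\<Union>m\<in>T. cball (ctr m) R)"
proof -
  have "\<exists>V. openin euclidean V \<and> x \<in> V \<and> finite {U \<in> (\<lambda>m. cball (ctr m) R) ` T. U \<inter> V \<noteq> {}}"
    for x
  proof (intro exI conjI)
    have "{U \<in> (\<lambda>m. cball (ctr m) R) ` T. U \<inter> ball x 1 \<noteq> {}}
        = (\<lambda>m. cball (ctr m) R) ` {m\<in>T. cball (ctr m) R \<inter> ball x 1 \<noteq> {}}"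
      by auto
    then show "finite {U \<in> (\<lambda>m. cball (ctr m) R) ` T. U \<inter> ball x 1 \<noteq> {}}"
      using finite_disjoint_cballs_meeting_ball[of R T ctr] assms by simp
  qed auto
  then have "locally_finite_in euclidean ((\<lambda>m. cball (ctr m) R) ` T)"
    by (simp add: locally_finite_in_def)
  then have "closedin euclidean (\<Union> ((\<lambda>m. cball (ctr m) R) ` T))"
    by (rule closedin_locally_finite_Union[rotated]) (auto simp flip: closed_closedin)
  then show ?thesis
    by (simp only: closed_closedin)
qed

lemma sphere_subset_closure_outside_cball:
  fixes a :: "'a::{real_normed_vector, perfect_space}"
  assumes "open V" "w \<in> V" "w \<in> sphere a r"
  shows "w \<in> closure (V - cball a r)"
proof -
  have "w \<in> closure (- cball a r)"
    using assms(3) by (simp add: closure_complement)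
  then show ?thesis
    using open_Int_closure_subset[OF \<open>open V\<close>] assms(2) by (auto simp: Diff_eq)
qed

lemma le_at_closure_point:
  fixes f g :: "'a::t2_space \<Rightarrow> real"
  assumes "isCont f w" "isCont g w" "w \<in> closure S" "\<And>y. y \<in> S \<Longrightarrow> f y \<le> g y"
  shows "f w \<le> g w"
proof (cases "w \<in> S")
  case False
  then have "at w within S \<noteq> bot"
    using assms(3) by (simp add: closure_def trivial_limit_within)
  moreover have "\<forall>\<^sub>F y in at w within S. f y \<le> g y"
    using assms(4) by (simp add: eventually_at_filter)
  ultimately show ?thesis
    using assms(1,2) by (metis continuous_at_imp_continuous_at_within continuous_within tendsto_le)
qed (use assms in auto)

lemma norm_le_in_cball_from_sphere:
  fixes f :: "complex \<Rightarrow> complex"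
  assumes "f holomorphic_on cball a r" "M \<ge> 0" "c \<ge> 0" "p \<ge> 0"
    and on_sphere: "\<And>w. w \<in> sphere a r \<Longrightarrow> norm (f w) \<le> C + M * exp (c * norm w powr p)"
    and "z \<in> cball a r"
  shows "norm (f z) \<le> C + M * exp (c * (norm z + 2 * r) powr p)"
proof (rule maximum_modulus_frontier[of f "cball a r"])
  show "f holomorphic_on interior (cball a r)"
    using assms(1) by (rule holomorphic_on_subset) (simp add: ball_subset_cball)
  show "continuous_on (closure (cball a r)) f"
    using assms(1) by (simp add: holomorphic_on_imp_continuous_on)
  fix w assume "w \<in> frontier (cball a r)"
  then have w: "w \<in> sphere a r"
    by simp
  have "norm w \<le> norm z + dist z a + dist a w"
    using norm_triangle_ineq2[of w z] dist_triangle[of z w a] by (simp add: dist_norm norm_minus_commute)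
  also have "\<dots> \<le> norm z + 2 * r"
    using w \<open>z \<in> cball a r\<close> by (simp add: dist_commute)
  finally have "norm w powr p \<le> (norm z + 2 * r) powr p"
    using \<open>p \<ge> 0\<close> by (intro powr_mono2) auto
  then have "M * exp (c * norm w powr p) \<le> M * exp (c * (norm z + 2 * r) powr p)"
    using \<open>M \<ge> 0\<close> \<open>c \<ge> 0\<close> by (simp add: mult_left_mono)
  then show "norm (f w) \<le> C + M * exp (c * (norm z + 2 * r) powr p)"
    using on_sphere[OF w] by linarith
qed (use assms in auto)

lemma growth_bound_extends_to_sphere:
  fixes f :: "complex \<Rightarrow> complex"
  assumes "open \<Omega>" "continuous_on \<Omega> f" "p > 0" "closed F"
    and "w \<in> \<Omega> - F" "w \<in> sphere a r"
    and growth: "\<And>z. z \<in> \<Omega> - F - cball a r \<Longrightarrow> norm (f z) \<le> M * exp (c * norm z powr p)"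
  shows "norm (f w) \<le> M * exp (c * norm w powr p)"
proof (rule le_at_closure_point[where f = "\<lambda>z. norm (f z)"])
  show "isCont (\<lambda>z. norm (f z)) w"
    using assms(1,2,5) continuous_on_eq_continuous_at by (blast intro: isCont_norm)
  show "isCont (\<lambda>z. M * exp (c * norm z powr p)) w"
    using \<open>p > 0\<close> continuous_on_eq_continuous_at[OF open_UNIV]
    by (fastforce intro: continuous_intros continuous_on_powr')
  show "w \<in> closure (\<Omega> - F - cball a r)"
    using assms by (intro sphere_subset_closure_outside_cball) auto
qed (use growth in blast)

lemma growth_bound_in_disjoint_cball:
  fixes f :: "complex \<Rightarrow> complex" and ctr :: "'i \<Rightarrow> complex"
  assumes "open \<Omega>" "f holomorphic_on \<Omega>" "p > 0" "R > 0" "M \<ge> 0" "c \<ge> 0" "C \<ge> 0"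
    and "closed U" and on_U: "\<And>z. z \<in> U \<Longrightarrow> norm (f z) \<le> C"
    and disj: "\<And>m n. m \<in> T \<Longrightarrow> n \<in> T \<Longrightarrow> m \<noteq> n \<Longrightarrow> cball (ctr m) R \<inter> cball (ctr n) R = {}"
    and growth: "\<And>z. z \<in> \<Omega> - U - (\<Union>m\<in>T. cball (ctr m) R) \<Longrightarrow>
                   norm (f z) \<le> M * exp (c * norm z powr p)"
    and "n \<in> T" "cball (ctr n) R \<subseteq> \<Omega>" "z \<in> cball (ctr n) R"
  shows "norm (f z) \<le> C + M * exp (c * (norm z + 2 * R) powr p)"
proof (rule norm_le_in_cball_from_sphere)
  show "f holomorphic_on cball (ctr n) R"
    using assms(2,13) by (rule holomorphic_on_subset)
  fix w assume w: "w \<in> sphere (ctr n) R"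
  show "norm (f w) \<le> C + M * exp (c * norm w powr p)"
  proof (cases "w \<in> U")
    case True
    then show ?thesis
      using on_U[of w] \<open>M \<ge> 0\<close> by (simp add: add_increasing2)
  next
    case False
    define F where "F = U \<union> (\<Union>m\<in>T - {n}. cball (ctr m) R)"
    have "norm (f w) \<le> M * exp (c * norm w powr p)"
    proof (rule growth_bound_extends_to_sphere[where \<Omega> = \<Omega> and f = f and F = F])
      show "continuous_on \<Omega> f"
        using assms(2) by (rule holomorphic_on_imp_continuous_on)
      show "closed F"
        unfolding F_def using \<open>closed U\<close> \<open>R > 0\<close> disj
        by (intro closed_Un closed_Union_disjoint_cballs) auto
      show "w \<in> \<Omega> - F"
        unfolding F_def using False disj[OF \<open>n \<in> T\<close>] w \<open>cball (ctr n) R \<subseteq> \<Omega>\<close> by fastforce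
      show "norm (f y) \<le> M * exp (c * norm y powr p)" if "y \<in> \<Omega> - F - cball (ctr n) R" for y
        using that unfolding F_def by (intro growth) blast
    qed (use \<open>open \<Omega>\<close> \<open>p > 0\<close> w in auto)
    then show ?thesis
      using \<open>C \<ge> 0\<close> by linarith
  qed
qed (use assms in auto)

lemma powr_add_le_two_powr:
  fixes a b p :: real
  assumes "a \<ge> 0" "b \<ge> 0" "p \<ge> 0"
  shows "(a + b) powr p \<le> 2 powr p * (a powr p + b powr p)"
proof -
  have "(a + b) powr p \<le> (2 * max a b) powr p"
    using assms by (intro powr_mono2) auto
  also have "\<dots> = 2 powr p * max a b powr p"
    using assms by (simp add: powr_mult)
  also have "max a b powr p \<le> a powr p + b powr p"
    by (simp add: max_def)
  finally show ?thesis
    by simp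
qed

lemma Ap_alg_if_shifted_growth:
  fixes f :: "complex \<Rightarrow> complex"
  assumes "f holomorphic_on S" "p \<ge> 0" "C \<ge> 0" "M \<ge> 0" "c \<ge> 0" "A \<ge> 0"
    and growth: "\<And>z. z \<in> S \<Longrightarrow> norm (f z) \<le> C + M * exp (c * (norm z + A) powr p)"
  shows "f \<in> Ap_alg p S"
proof -
  define B where "B = exp (c * 2 powr p * A powr p)"
  define c' where "c' = c * 2 powr p + 1"
  define M' where "M' = C + M * B + 1"
  have "norm (f z) \<le> M' * exp (c' * norm z powr p)" if "z \<in> S" for z
  proof -
    define E where "E = exp (c' * norm z powr p)"
    have "E \<ge> 1"
      using \<open>c \<ge> 0\<close> unfolding E_def c'_def by simp
    have "c * (norm z + A) powr p \<le> c * (2 powr p * (norm z powr p + A powr p))"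
      using powr_add_le_two_powr[of "norm z" A p] assms by (intro mult_left_mono) auto
    also have "\<dots> \<le> c * 2 powr p * A powr p + c' * norm z powr p"
      unfolding c'_def by (simp add: algebra_simps)
    finally have "exp (c * (norm z + A) powr p) \<le> B * E"
      unfolding B_def E_def by (simp flip: exp_add)
    then have "norm (f z) \<le> C + M * B * E"
      using growth[OF that] mult_left_mono[OF _ \<open>M \<ge> 0\<close>] by (fastforce simp: mult.assoc)
    also have "\<dots> \<le> M' * E"
      using \<open>E \<ge> 1\<close> \<open>C \<ge> 0\<close> mult_left_mono[of 1 E C] unfolding M'_def by (simp add: algebra_simps)
    finally show ?thesis
      unfolding E_def .
  qed
  moreover have "c' > 0" "M' > 0"
    using assms unfolding c'_def M'_def B_def by (simp_all add: add_nonneg_pos)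
  ultimately show ?thesis
    using assms(1) unfolding Ap_alg_def by blast
qed

lemma Ap_alg_extends_over_cballs:
  fixes f :: "complex \<Rightarrow> complex" and ctr :: "'i \<Rightarrow> complex"
  assumes "open \<Omega>" "f holomorphic_on \<Omega>" "p > 0" "R > 0"
    and discs_in: "\<And>n. n \<in> K \<Longrightarrow> cball (ctr n) R \<subseteq> \<Omega>"
    and "finite K0" "K0 \<subseteq> K"
    and disj: "\<And>m n. m \<in> K - K0 \<Longrightarrow> n \<in> K - K0 \<Longrightarrow> m \<noteq> n \<Longrightarrow>
                 cball (ctr m) R \<inter> cball (ctr n) R = {}"
    and "f \<in> Ap_alg p (\<Omega> - (\<Union>n\<in>K. cball (ctr n) R))"
  shows "f \<in> Ap_alg p \<Omega>"
proof -
  define S where "S = \<Omega> - (\<Union>n\<in>K. cball (ctr n) R)"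
  define U where "U = (\<Union>n\<in>K0. cball (ctr n) R)"
  obtain c M where "c > 0" "M > 0"
    and growth: "\<And>z. z \<in> S \<Longrightarrow> norm (f z) \<le> M * exp (c * norm z powr p)"
    using assms(9) unfolding S_def Ap_alg_def by blast
  have "compact U"
    unfolding U_def using \<open>finite K0\<close> by (intro compact_UN) auto
  moreover have "continuous_on U f"
    unfolding U_def using assms(2) discs_in \<open>K0 \<subseteq> K\<close>
    by (meson UN_least continuous_on_subset holomorphic_on_imp_continuous_on subsetD)
  ultimately obtain C where "C \<ge> 0" and on_U: "\<And>z. z \<in> U \<Longrightarrow> norm (f z) \<le> C"
    using continuous_on_compact_bound by blast
  have S_eq: "S = \<Omega> - U - (\<Union>n\<in>K - K0. cball (ctr n) R)"
    unfolding S_def U_def using \<open>K0 \<subseteq> K\<close> by blast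
  have "norm (f z) \<le> C + M * exp (c * (norm z + 2 * R) powr p)" if "z \<in> \<Omega>" for z
  proof -
    consider "z \<in> S" | "z \<in> U" | n where "n \<in> K - K0" "z \<in> cball (ctr n) R"
      using \<open>z \<in> \<Omega>\<close> unfolding S_eq by blast
    then show ?thesis
    proof cases
      case 1
      have "norm z powr p \<le> (norm z + 2 * R) powr p"
        using \<open>p > 0\<close> \<open>R > 0\<close> by (intro powr_mono2) auto
      then have "M * exp (c * norm z powr p) \<le> M * exp (c * (norm z + 2 * R) powr p)"
        using \<open>M > 0\<close> \<open>c > 0\<close> by simp
      then show ?thesis
        using growth[OF 1] \<open>C \<ge> 0\<close> by linarith
    next
      case 2
      then show ?thesis
        using on_U[OF 2] \<open>M > 0\<close> by (simp add: add_increasing2)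
    next
      case 3
      show ?thesis
      proof (rule growth_bound_in_disjoint_cball[OF assms(1-4)])
        show "closed U"
          using \<open>compact U\<close> by (rule compact_imp_closed)
        show "z \<in> \<Omega> - U - (\<Union>m\<in>K - K0. cball (ctr m) R) \<Longrightarrow>
              norm (f z) \<le> M * exp (c * norm z powr p)" for z
          using growth by (simp only: S_eq)
      qed (use 3 discs_in disj on_U \<open>C \<ge> 0\<close> \<open>M > 0\<close> \<open>c > 0\<close> in auto)
    qed
  qed
  then show ?thesis
    using assms(2,3,4) \<open>C \<ge> 0\<close> \<open>M > 0\<close> \<open>c > 0\<close>
    by (intro Ap_alg_if_shifted_growth[of f \<Omega> p C M c "2 * R"]) auto
qed

theorem proposition7:
  fixes \<Omega> :: "complex set" and p R :: real
    and ctr :: "nat \<Rightarrow> complex" and K :: "nat set"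
  assumes "open \<Omega>" and "connected \<Omega>"
    and "p > 0" and "R > 0"
    and "(\<exists>M. K = {1..M}) \<or> K = {1..}"
    and "\<forall>n\<in>K. cball (ctr n) R \<subseteq> \<Omega>"
    and "infinite K \<Longrightarrow> (\<exists>N. \<forall>n\<in>K. \<forall>m\<in>K. N < n \<and> N < m \<and> n \<noteq> m \<longrightarrow>
            cball (ctr n) R \<inter> cball (ctr m) R = {})"
  shows "hol_alg \<Omega> \<inter> Ap_alg p (\<Omega> - (\<Union>n\<in>K. cball (ctr n) R)) \<subseteq> Ap_alg p \<Omega>"
proof
  fix f assume f: "f \<in> hol_alg \<Omega> \<inter> Ap_alg p (\<Omega> - (\<Union>n\<in>K. cball (ctr n) R))"
  obtain N where disj: "\<forall>n\<in>K. \<forall>m\<in>K. N < n \<and> N < m \<and> n \<noteq> m \<longrightarrow>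
                          cball (ctr n) R \<inter> cball (ctr m) R = {}"
  proof (cases "finite K")
    case True
    show ?thesis
      by (rule that[of "Max K"]) (meson Max_ge True leD)
  qed (use assms(7) in blast)
  show "f \<in> Ap_alg p \<Omega>"
  proof (rule Ap_alg_extends_over_cballs)
    show "finite {n\<in>K. n \<le> N}"
      by simp
    show "cball (ctr m) R \<inter> cball (ctr n) R = {}"
      if "m \<in> K - {n\<in>K. n \<le> N}" "n \<in> K - {n\<in>K. n \<le> N}" "m \<noteq> n" for m n
      using that disj by (metis (no_types, lifting) DiffE mem_Collect_eq not_le)
  qed (use assms f in \<open>auto simp: hol_alg_def\<close>)
qed

end
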